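(* Let $r\in\mathbb{R}\setminus\{0\}$ and let $F$ be a distribution function on $\mathbb{R}$ with a density $f$ that is $(-r+1)$-decreasing with threshold $t^*(-r+1)$. If $r<0$, then $z\mapsto F(z^{1/r})$ is concave on $(0,(t^*(-r+1))^r)$; if $r>0$, then $z\mapsto F(z^{1/r})$ is concave on $((t^*(-r+1))^r,+\infty)$. In particular, $F$ is $r$-revealed-concave with threshold $t^{**}(r)=(t^*(-r+1))^r$.
   Context: A function $f:\mathbb{R}\to\mathbb{R}$ is $\alpha$-decreasing ($\alpha\in\mathbb{R}$) with threshold $t^*(\alpha)>0$ if $f$ is continuous on $(0,\infty)$ and $t\mapsto t^\alpha f(t)$ is strictly decreasing for all $t>t^*(\alpha)$. A function $F$ is $r$-revealed-concave with threshold $t^{**}(r)>0$ if: for $r<0$, $t\mapsto F(t^{1/r})$ is concave on $(0,t^{**}(r)]$; for $r=0$, $t\mapsto F(e^t)$ is concave on $[t^{**}(r),\infty)$; for $r>0$, $t\mapsto F(t^{1/r})$ is concave on $[t^{**}(r),\infty)$. *)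

theory Defs
  imports "HOL-Analysis.Analysis" "HOL-Probability.Probability"
begin

definition has_density :: "(real \<Rightarrow> real) \<Rightarrow> (real \<Rightarrow> real) \<Rightarrow> bool" where
  "has_density F f \<longleftrightarrow>
     f \<in> borel_measurable lborel \<and> (\<forall>x. 0 \<le> f x) \<and> integrable lborel f \<and>
     integral\<^sup>L lborel f = 1 \<and>
     (\<forall>x. F x = (LINT t:{..x}|lborel. f t))"

definition alpha_decreasing :: "real \<Rightarrow> real \<Rightarrow> (real \<Rightarrow> real) \<Rightarrow> bool" where
  "alpha_decreasing \<alpha> tstar f \<longleftrightarrow>
     0 < tstar \<and> continuous_on {0<..} f \<and>
     (\<forall>s t. tstar < s \<and> s < t \<longrightarrow> t powr \<alpha> * f t < s powr \<alpha> * f s)"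

definition revealed_concave :: "real \<Rightarrow> real \<Rightarrow> (real \<Rightarrow> real) \<Rightarrow> bool" where
  "revealed_concave r tss F \<longleftrightarrow>
     0 < tss \<and>
     (if r < 0 then concave_on {0<..tss} (\<lambda>t. F (t powr (1 / r)))
      else if r = 0 then concave_on {tss..} (\<lambda>t. F (exp t))
      else concave_on {tss..} (\<lambda>t. F (t powr (1 / r))))"

end

theory Submission
  imports Defs
begin

text \<open>By the chain rule, the derivative of \<open>z \<mapsto> F (z powr (1 / r))\<close> is \<open>h (t) / r\<close> with
  \<open>t = z powr (1 / r)\<close> and \<open>h (t) = t powr (1 - r) * f t\<close>. Beyond the threshold \<open>h\<close> decreases
  in \<open>t\<close>, and \<open>t\<close> moves with \<open>z\<close> in the direction of the sign of \<open>r\<close>; the two sign changes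
  for \<open>r < 0\<close> cancel, so the derivative decreases in \<open>z\<close> and the function is concave.\<close>

lemma concave_on_realI:
  assumes "connected A"
    and "\<And>x. x \<in> A \<Longrightarrow> (f has_real_derivative f' x) (at x)"
    and "\<And>x y. x \<in> A \<Longrightarrow> y \<in> A \<Longrightarrow> x \<le> y \<Longrightarrow> f' y \<le> f' x"
  shows "concave_on A f"
proof -
  have "convex_on A (\<lambda>x. - f x)"
    using assms by (intro convex_on_realI[where f'="\<lambda>x. - f' x"]) (auto intro: DERIV_minus)
  then show ?thesis by (simp add: concave_on_def)
qed

lemma has_density_eq_add_integral:
  assumes "has_density F f" and "a \<le> u"
  shows "F u = F a + integral {a..u} f"
proof -
  have int: "integrable lborel f" and F: "\<And>x. F x = (LINT t:{..x}|lborel. f t)"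
    using assms(1) unfolding has_density_def by auto
  have set_int: "set_integrable lborel A f" if "A \<in> sets lborel" for A
    unfolding set_integrable_def using integrable_mult_indicator[OF that int] .
  have split: "F x = (LINT t:{..<a}|lborel. f t) + integral {a..x} f" if "a \<le> x" for x
  proof -
    have "{..x} = {..<a} \<union> {a..x}" using that by auto
    then have "F x = (LINT t:{..<a}|lborel. f t) + (LINT t:{a..x}|lborel. f t)"
      unfolding F by (simp only:) (rule set_integral_Un, auto intro!: set_int)
    then show ?thesis by (simp add: set_borel_integral_eq_integral set_int)
  qed
  show ?thesis using split[of a] split[OF assms(2)] by simp
qed

lemma has_density_has_real_derivative:
  assumes "has_density F f" and "open S" "continuous_on S f" "x \<in> S"
  shows "(F has_real_derivative f x) (at x)"
proof -
  obtain e where e: "e > 0" "ball x e \<subseteq> S"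
    using assms(2,4) openE by blast
  define a b where "a = x - e / 2" and "b = x + e / 2"
  have ab: "a < x" "x < b" using e(1) by (auto simp: a_def b_def)
  have "{a..b} \<subseteq> ball x e" using e(1) by (auto simp: a_def b_def dist_real_def)
  then have "continuous_on {a..b} f"
    using e(2) assms(3) continuous_on_subset by blast
  then have "((\<lambda>u. integral {a..u} f) has_real_derivative f x) (at x within {a..b})"
    by (rule integral_has_real_derivative) (use ab in auto)
  then have "((\<lambda>u. F a + integral {a..u} f) has_real_derivative f x) (at x)"
    using at_within_Icc_at[OF ab] by (auto intro!: derivative_eq_intros)
  then show ?thesis
  proof (rule has_field_derivative_transform_within_open[where S="{a<..<b}"])
    show "F a + integral {a..y} f = F y" if "y \<in> {a<..<b}" for y
      using has_density_eq_add_integral[OF assms(1), of a y] that by simp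
  qed (use ab in auto)
qed

lemma antimono_on_atLeast_if_strict_antimono_on_greaterThan:
  fixes h :: "real \<Rightarrow> real"
  assumes "strict_antimono_on {a<..} h" and "continuous (at_right a) h"
  shows "antimono_on {a..} h"
proof (rule monotone_onI)
  fix s t assume "s \<in> {a..}" "t \<in> {a..}" "s \<le> t"
  have dec: "h t < h s" if "a < s" "s < t" for s t
    using monotone_onD[OF assms(1), of s t] that by auto
  show "h t \<le> h s"
  proof (cases "a < s \<or> s = t")
    case True
    then show ?thesis using dec[of s t] \<open>s \<le> t\<close> by (cases "s = t") auto
  next
    case False
    then have s: "s = a" and "a < t" using \<open>s \<in> {a..}\<close> \<open>s \<le> t\<close> by auto
    have "eventually (\<lambda>y. h t \<le> h y) (at_right a)"
      unfolding eventually_at_right_field using \<open>a < t\<close> dec less_imp_le by blast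
    moreover have "(h \<longlongrightarrow> h a) (at_right a)"
      using assms(2) by (simp add: continuous_within)
    ultimately show ?thesis
      using s by (auto intro: tendsto_lowerbound)
  qed
qed

lemma alpha_decreasing_antimono_on:
  assumes "alpha_decreasing \<alpha> tstar f"
  shows "antimono_on {tstar..} (\<lambda>t. t powr \<alpha> * f t)"
proof (rule antimono_on_atLeast_if_strict_antimono_on_greaterThan)
  have "0 < tstar" and "continuous_on {0<..} f"
    using assms unfolding alpha_decreasing_def by auto
  then have "isCont f tstar"
    by (simp add: continuous_on_eq_continuous_at)
  then have "isCont (\<lambda>t. t powr \<alpha> * f t) tstar"
    using \<open>0 < tstar\<close> by (intro continuous_intros) auto
  then show "continuous (at_right tstar) (\<lambda>t. t powr \<alpha> * f t)"
    by (rule continuous_at_imp_continuous_within)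
  show "strict_antimono_on {tstar<..} (\<lambda>t. t powr \<alpha> * f t)"
    using assms unfolding alpha_decreasing_def by (auto intro!: monotone_onI)
qed

lemma has_density_powr_has_real_derivative:
  assumes "has_density F f" "continuous_on {0<..} f" and "r \<noteq> 0" "z > 0"
  shows "((\<lambda>z. F (z powr (1 / r))) has_real_derivative
          1 / r * ((z powr (1 / r)) powr (1 - r) * f (z powr (1 / r)))) (at z)"
proof -
  have "(F has_real_derivative f (z powr (1 / r))) (at (z powr (1 / r)))"
    using assms by (intro has_density_has_real_derivative[where S="{0<..}"]) auto
  from DERIV_chain2[OF this has_real_derivative_powr[OF \<open>z > 0\<close>]]
  have "((\<lambda>z. F (z powr (1 / r))) has_real_derivative
          f (z powr (1 / r)) * (1 / r * z powr (1 / r - 1))) (at z)" .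
  moreover have "(z powr (1 / r)) powr (1 - r) = z powr (1 / r - 1)"
    using assms(3) by (simp add: powr_powr field_simps)
  ultimately show ?thesis by (simp add: mult_ac)
qed

lemma concave_on_distribution_powr:
  assumes "has_density F f" "alpha_decreasing (1 - r) tstar f" "r \<noteq> 0"
    and "connected A" "A \<subseteq> {0<..}" "\<And>z. z \<in> A \<Longrightarrow> tstar \<le> z powr (1 / r)"
  shows "concave_on A (\<lambda>z. F (z powr (1 / r)))"
proof (rule concave_on_realI)
  define h where "h t = t powr (1 - r) * f t" for t
  have "continuous_on {0<..} f"
    using assms(2) unfolding alpha_decreasing_def by auto
  then show "((\<lambda>z. F (z powr (1 / r))) has_real_derivative 1 / r * h (z powr (1 / r))) (at z)"
    if "z \<in> A" for z
    using that assms unfolding h_def by (intro has_density_powr_has_real_derivative) auto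
  show "1 / r * h (y powr (1 / r)) \<le> 1 / r * h (x powr (1 / r))"
    if xy: "x \<in> A" "y \<in> A" "x \<le> y" for x y
  proof (cases "r > 0")
    case True
    have "x powr (1 / r) \<le> y powr (1 / r)"
      using True xy assms(5) by (intro powr_mono2) auto
    then have "h (y powr (1 / r)) \<le> h (x powr (1 / r))"
      unfolding h_def using monotone_onD[OF alpha_decreasing_antimono_on[OF assms(2)]] assms(6) xy
      by auto
    then show ?thesis using True by (simp add: divide_right_mono)
  next
    case False
    then have "r < 0" using assms(3) by simp
    have "y powr (1 / r) \<le> x powr (1 / r)"
      using \<open>r < 0\<close> xy assms(5) by (intro powr_mono2') auto
    then have "h (x powr (1 / r)) \<le> h (y powr (1 / r))"
      unfolding h_def using monotone_onD[OF alpha_decreasing_antimono_on[OF assms(2)]] assms(6) xy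
      by auto
    then show ?thesis using \<open>r < 0\<close> by (simp add: divide_right_mono_neg)
  qed
qed (use assms in auto)

theorem lemma2p8:
  fixes r tstar :: real and F f :: "real \<Rightarrow> real"
  assumes "r \<noteq> 0"
    and "has_density F f"
    and "alpha_decreasing (- r + 1) tstar f"
  shows "(r < 0 \<longrightarrow> concave_on {0<..<tstar powr r} (\<lambda>z. F (z powr (1 / r))))
       \<and> (r > 0 \<longrightarrow> concave_on {tstar powr r<..} (\<lambda>z. F (z powr (1 / r))))
       \<and> revealed_concave r (tstar powr r) F"
proof -
  have f: "alpha_decreasing (1 - r) tstar f" using assms(3) by simp
  have "0 < tstar" using assms(3) unfolding alpha_decreasing_def by auto
  then have tstar: "(tstar powr r) powr (1 / r) = tstar"
    using assms(1) by (simp add: powr_powr)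
  have neg: "concave_on {0<..tstar powr r} (\<lambda>z. F (z powr (1 / r)))" if "r < 0"
  proof (rule concave_on_distribution_powr[OF assms(2) f assms(1)])
    show "tstar \<le> z powr (1 / r)" if "z \<in> {0<..tstar powr r}" for z
      using powr_mono2'[of "1 / r" z "tstar powr r"] that \<open>r < 0\<close> tstar by auto
  qed auto
  have pos: "concave_on {tstar powr r..} (\<lambda>z. F (z powr (1 / r)))" if "r > 0"
  proof (rule concave_on_distribution_powr[OF assms(2) f assms(1)])
    show "{tstar powr r..} \<subseteq> {0<..}"
      using \<open>0 < tstar\<close> by (auto intro: less_le_trans[of 0 "tstar powr r"])
    show "tstar \<le> z powr (1 / r)" if "z \<in> {tstar powr r..}" for z
      using powr_mono2[of "1 / r" "tstar powr r" z] that \<open>r > 0\<close> tstar by auto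
  qed auto
  show ?thesis
    using neg pos \<open>0 < tstar\<close> assms(1)
    by (auto simp: revealed_concave_def concave_on_def intro: convex_on_subset)
qed

end
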